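(* Let $\mathbf A$ be a t-algebra of type $\tau$ and trace $\mathsf a$, let $\mathcal F$ be a functional clone $\tau$-algebra with value domain $\mathbf A$ and universe $F\subseteq A^{\mathsf a}$, and let $s\in\mathsf a$. Then (i) the map $\bar s:F\to A$, $\bar s(\varphi)=\varphi(s)$, is a t-homomorphism from the t-algebra $\mathcal F^\downarrow$ into $\mathbf A$; and (ii) $\mathcal F^\downarrow$ is t-isomorphic to a t-subalgebra of a t-power of $\mathbf A$ (namely via $\varphi\mapsto(\varphi(s))_{s\in\mathsf a}$ into the t-power with index set $\mathsf a$).
   Context: $\mathbb N=\{1,2,\dots\}$. A thread on $A$ is $s\in A^{\mathbb N}$; $r[a_1,\dots,a_n]$ is the thread with entries $a_i$ for $i\le n$ and $r_i$ for $i>n$. $r\equiv_{\mathbb N}s$ iff $\{i:r_i\ne s_i\}$ is finite; $[s]_{\mathbb N}$ denotes the class. A trace on $A$ is a nonempty $\mathsf a\subseteq A^{\mathbb N}$ that is a union of $\equiv_{\mathbb N}$-classes. For $f:A\to B$, $f^{\mathbb N}$ acts coordinatewise on threads. A t-algebra of type $\tau$ and trace $\mathsf a$ is $\mathbf A=(A,\mathsf a,\sigma^{\mathbf A})_{\sigma\in\tau}$ with each $\sigma^{\mathbf A}:\mathsf a\to A$ an arbitrary map. t-subalgebra of $\mathbf A$: $(B,\mathsf b,\sigma^{\mathbf A}|_{\mathsf b})$ with $B\subseteq A$, $\mathsf b\subseteq\mathsf a$ a trace on $B$, $\sigma^{\mathbf A}(s)\in B$ for all $s\in\mathsf b$. t-homomorphism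 $\mathbf A\to\mathbf B$ (traces $\mathsf a,\mathsf b$): a map $f:A\to B$ with $f^{\mathbb N}(\mathsf a)\subseteq\mathsf b$ and $f(\sigma^{\mathbf A}(s))=\sigma^{\mathbf B}(f^{\mathbb N}(s))$ for $s\in\mathsf a$; a t-isomorphism is a bijective $f$ with $f^{\mathbb N}:\mathsf a\to\mathsf b$ surjective. The t-product of $\mathbf A_j$ ($j\in J$) has universe $\prod_jA_j$, trace $\prod_j\mathsf a_j$ (where $(s^j)_j$ is identified with the thread whose $k$-th entry is $(s^j_k)_j$), and $\sigma((s^j)_j)=(\sigma^{\mathbf A_j}(s^j))_j$. Clone $\tau$-algebras: algebras $(C,q_n,\mathsf e_i,\sigma)$ with constants $\mathsf e_i$ ($i\ge1$), $\sigma\in\tau$, and $(n+1)$-ary $q_n$ satisfying (C1) $q_n(\mathsf e_i,\bar x)=x_i$ ($i\le n$); (C2) $q_n(\mathsf e_j,\bar x)=\mathsf e_j$ ($j>n$); (C3) $q_n(x,\mathsf e_1,\dots,\mathsf e_n)=x$; (C4) $q_n(x,\bar y)=q_k(x,\bar y,\mathsf e_{n+1},\dots,\mathsf e_k)$ ($k>n$); (C5) $q_n(q_n(x,\bar y),\bar z)=q_n(x,q_n(y_1,\bar z),\dots,q_n(y_n,\bar z))$. The full functional clone $\tau$-algebra $\mathbf A^{(\mathsf a)}$ has universe all maps $\mathsf a\to A$, $\mathsf e_i(s)=s_i$, $q_n(\varphi,\psi_1,\dots,\psi_n)(s)=\varphi(s[\psi_1(s),\dots,\psi_n(s)])$, $\sigma\mapsto\sigma^{\mathbf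 A}$; its subalgebras are the functional clone $\tau$-algebras with value domain $\mathbf A$. For a clone $\tau$-algebra $\mathcal C$ let $\epsilon^{\mathcal C}=(\mathsf e_1^{\mathcal C},\mathsf e_2^{\mathcal C},\dots)$ and $\pmb\epsilon=[\epsilon^{\mathcal C}]_{\mathbb N}$ (a trace on $C$); for $c\in C$ define $\varphi_c:\pmb\epsilon\to C$ by $\varphi_c(\epsilon^{\mathcal C}[s_1,\dots,s_n])=q_n^{\mathcal C}(c,s_1,\dots,s_n)$. The t-algebra under $\mathcal C$ is $\mathcal C^\downarrow=(C,\pmb\epsilon,\varphi_{\sigma^{\mathcal C}})_{\sigma\in\tau}$. *)

theory Defs
  imports "HOL-Library.FuncSet"
begin

text \<open>Threads are 0-indexed: the paper's coordinate i (i >= 1) is our coordinate i - 1.\<close>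

definition thread_on :: "'a set \<Rightarrow> (nat \<Rightarrow> 'a) \<Rightarrow> bool" where
  "thread_on A s \<longleftrightarrow> (\<forall>i. s i \<in> A)"

definition eqN :: "(nat \<Rightarrow> 'a) \<Rightarrow> (nat \<Rightarrow> 'a) \<Rightarrow> bool" where
  "eqN r s \<longleftrightarrow> finite {i. r i \<noteq> s i}"

definition is_trace :: "'a set \<Rightarrow> (nat \<Rightarrow> 'a) set \<Rightarrow> bool" where
  "is_trace A tr \<longleftrightarrow> tr \<noteq> {} \<and> (\<forall>s\<in>tr. thread_on A s)
     \<and> (\<forall>s\<in>tr. \<forall>r. thread_on A r \<and> eqN r s \<longrightarrow> r \<in> tr)"

definition tupd :: "(nat \<Rightarrow> 'a) \<Rightarrow> 'a list \<Rightarrow> nat \<Rightarrow> 'a" where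
  "tupd s as = (\<lambda>i. if i < length as then as ! i else s i)"

definition talg :: "'a set \<Rightarrow> (nat \<Rightarrow> 'a) set \<Rightarrow> ('t \<Rightarrow> (nat \<Rightarrow> 'a) \<Rightarrow> 'a) \<Rightarrow> bool" where
  "talg A tr ops \<longleftrightarrow> is_trace A tr \<and> (\<forall>\<sigma>. \<forall>s\<in>tr. ops \<sigma> s \<in> A)"

definition tsubalg ::
  "'a set \<Rightarrow> (nat \<Rightarrow> 'a) set \<Rightarrow> ('t \<Rightarrow> (nat \<Rightarrow> 'a) \<Rightarrow> 'a)
   \<Rightarrow> 'a set \<Rightarrow> (nat \<Rightarrow> 'a) set \<Rightarrow> bool" where
  "tsubalg A tr ops B trb \<longleftrightarrow> B \<subseteq> A \<and> trb \<subseteq> tr \<and> is_trace B trb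
     \<and> (\<forall>\<sigma>. \<forall>s\<in>trb. ops \<sigma> s \<in> B)"

definition thom ::
  "'a set \<Rightarrow> (nat \<Rightarrow> 'a) set \<Rightarrow> ('t \<Rightarrow> (nat \<Rightarrow> 'a) \<Rightarrow> 'a)
   \<Rightarrow> 'b set \<Rightarrow> (nat \<Rightarrow> 'b) set \<Rightarrow> ('t \<Rightarrow> (nat \<Rightarrow> 'b) \<Rightarrow> 'b)
   \<Rightarrow> ('a \<Rightarrow> 'b) \<Rightarrow> bool" where
  "thom A tra opsA B trb opsB f \<longleftrightarrow> f ` A \<subseteq> B
     \<and> (\<forall>s\<in>tra. f \<circ> s \<in> trb)
     \<and> (\<forall>\<sigma>. \<forall>s\<in>tra. f (opsA \<sigma> s) = opsB \<sigma> (f \<circ> s))"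

definition tiso ::
  "'a set \<Rightarrow> (nat \<Rightarrow> 'a) set \<Rightarrow> ('t \<Rightarrow> (nat \<Rightarrow> 'a) \<Rightarrow> 'a)
   \<Rightarrow> 'b set \<Rightarrow> (nat \<Rightarrow> 'b) set \<Rightarrow> ('t \<Rightarrow> (nat \<Rightarrow> 'b) \<Rightarrow> 'b)
   \<Rightarrow> ('a \<Rightarrow> 'b) \<Rightarrow> bool" where
  "tiso A tra opsA B trb opsB f \<longleftrightarrow> thom A tra opsA B trb opsB f
     \<and> bij_betw f A B \<and> (\<lambda>s. f \<circ> s) ` tra = trb"

definition tpow_univ :: "'j set \<Rightarrow> 'a set \<Rightarrow> ('j \<Rightarrow> 'a) set" where
  "tpow_univ J A = PiE J (\<lambda>_. A)"

definition tpow_trace :: "'j set \<Rightarrow> 'a set \<Rightarrow> (nat \<Rightarrow> 'a) set \<Rightarrow> (nat \<Rightarrow> ('j \<Rightarrow> 'a)) set" where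
  "tpow_trace J A tr = {T. (\<forall>k. T k \<in> PiE J (\<lambda>_. A)) \<and> (\<forall>j\<in>J. (\<lambda>k. T k j) \<in> tr)}"

definition tpow_ops :: "'j set \<Rightarrow> ('t \<Rightarrow> (nat \<Rightarrow> 'a) \<Rightarrow> 'a) \<Rightarrow> 't \<Rightarrow> (nat \<Rightarrow> ('j \<Rightarrow> 'a)) \<Rightarrow> ('j \<Rightarrow> 'a)" where
  "tpow_ops J ops \<sigma> T = (\<lambda>j\<in>J. ops \<sigma> (\<lambda>k. T k j))"

definition fproj :: "(nat \<Rightarrow> 'a) set \<Rightarrow> nat \<Rightarrow> (nat \<Rightarrow> 'a) \<Rightarrow> 'a" where
  "fproj tr i = (\<lambda>s\<in>tr. s i)"

definition fq :: "(nat \<Rightarrow> 'a) set \<Rightarrow> ((nat \<Rightarrow> 'a) \<Rightarrow> 'a) \<Rightarrow> ((nat \<Rightarrow> 'a) \<Rightarrow> 'a) list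
     \<Rightarrow> (nat \<Rightarrow> 'a) \<Rightarrow> 'a" where
  "fq tr \<phi> \<psi>s = (\<lambda>s\<in>tr. \<phi> (tupd s (map (\<lambda>\<psi>. \<psi> s) \<psi>s)))"

definition functional_clone ::
  "'a set \<Rightarrow> (nat \<Rightarrow> 'a) set \<Rightarrow> ('t \<Rightarrow> (nat \<Rightarrow> 'a) \<Rightarrow> 'a) \<Rightarrow> ((nat \<Rightarrow> 'a) \<Rightarrow> 'a) set \<Rightarrow> bool" where
  "functional_clone A tr ops F \<longleftrightarrow> F \<subseteq> (tr \<rightarrow>\<^sub>E A)
     \<and> (\<forall>i. fproj tr i \<in> F)
     \<and> (\<forall>\<phi>\<in>F. \<forall>\<psi>s. set \<psi>s \<subseteq> F \<longrightarrow> fq tr \<phi> \<psi>s \<in> F)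
     \<and> (\<forall>\<sigma>. restrict (ops \<sigma>) tr \<in> F)"

text \<open>The t-algebra under a clone tau-algebra (C, q, e, sigma), q c [s_1..s_n] = q_n(c,s_1,..,s_n)\<close>
definition down_trace :: "'c set \<Rightarrow> (nat \<Rightarrow> 'c) \<Rightarrow> (nat \<Rightarrow> 'c) set" where
  "down_trace C e = {t. thread_on C t \<and> eqN t e}"

definition down_phi :: "('c \<Rightarrow> 'c list \<Rightarrow> 'c) \<Rightarrow> (nat \<Rightarrow> 'c) \<Rightarrow> 'c \<Rightarrow> (nat \<Rightarrow> 'c) \<Rightarrow> 'c" where
  "down_phi q e c t = q c (map t [0..<(LEAST n. \<forall>i\<ge>n. t i = e i)])"

definition down_ops :: "('c \<Rightarrow> 'c list \<Rightarrow> 'c) \<Rightarrow> (nat \<Rightarrow> 'c) \<Rightarrow> ('t \<Rightarrow> 'c) \<Rightarrow> 't \<Rightarrow> (nat \<Rightarrow> 'c) \<Rightarrow> 'c" where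
  "down_ops q e sig \<sigma> = down_phi q e (sig \<sigma>)"

end

theory Submission
  imports Defs
begin

text \<open>Since every member of F is an extensional function on the trace, the map
  \<open>\<phi> \<mapsto> (\<phi>(s))\<^sub>s\<^sub>\<in>\<^sub>a\<close> is the identity on F, so the required t-subalgebra of the
  power is F itself with the trace of \<open>\<F>\<^sup>\<down>\<close>. Everything then reduces to one computation:
  for a thread t of \<open>\<F>\<^sup>\<down>\<close>, which agrees with the projections beyond some n, the clone
  operation \<open>q\<^sub>n(\<sigma>, t\<^sub>1, \<dots>, t\<^sub>n)\<close> evaluated at s equals \<open>\<sigma>\<^sup>A\<close> applied to the thread
  \<open>(t\<^sub>i(s))\<^sub>i\<close>, which lies in the trace because it differs from s in finitely many places.\<close>

lemma eqN_trans: "eqN r s \<Longrightarrow> eqN s t \<Longrightarrow> eqN r t"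
  unfolding eqN_def
  by (rule finite_subset[of _ "{i. r i \<noteq> s i} \<union> {i. s i \<noteq> t i}"]) auto

lemma eqN_Least_tail:
  assumes "eqN t e"
  shows "\<forall>i\<ge>(LEAST n. \<forall>i\<ge>n. t i = e i). t i = e i"
proof (rule LeastI_ex)
  obtain m where "\<forall>i\<in>{i. t i \<noteq> e i}. i < m"
    using assms finite_nat_set_iff_bounded unfolding eqN_def by blast
  then have "\<forall>i\<ge>m. t i = e i" by force
  then show "\<exists>n. \<forall>i\<ge>n. t i = e i" by blast
qed

lemma tupd_map_upt:
  assumes "\<forall>i\<ge>n. t i = s i"
  shows "tupd s (map t [0..<n]) = t"
  using assms by (auto simp: tupd_def)

lemma is_trace_down_trace:
  assumes "thread_on C e"
  shows "is_trace C (down_trace C e)"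
proof -
  have "e \<in> down_trace C e"
    using assms by (simp add: down_trace_def eqN_def)
  then show ?thesis
    using eqN_trans unfolding is_trace_def down_trace_def by blast
qed

context
  fixes A :: "'a set" and tr :: "(nat \<Rightarrow> 'a) set" and ops :: "'t \<Rightarrow> (nat \<Rightarrow> 'a) \<Rightarrow> 'a"
    and F :: "((nat \<Rightarrow> 'a) \<Rightarrow> 'a) set"
  assumes trace: "is_trace A tr"
    and clone: "functional_clone A tr ops F"
begin

abbreviation clone_trace :: "(nat \<Rightarrow> (nat \<Rightarrow> 'a) \<Rightarrow> 'a) set" where
  "clone_trace \<equiv> down_trace F (fproj tr)"

abbreviation clone_ops :: "'t \<Rightarrow> (nat \<Rightarrow> (nat \<Rightarrow> 'a) \<Rightarrow> 'a) \<Rightarrow> (nat \<Rightarrow> 'a) \<Rightarrow> 'a" where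
  "clone_ops \<equiv> down_ops (fq tr) (fproj tr) (\<lambda>\<sigma>. restrict (ops \<sigma>) tr)"

lemma clone_extensional: "F \<subseteq> tr \<rightarrow>\<^sub>E A"
  using clone by (simp add: functional_clone_def)

lemma restrict_clone_eq: "\<phi> \<in> F \<Longrightarrow> (\<lambda>s\<in>tr. \<phi> s) = \<phi>"
  using clone_extensional by (metis PiE_iff extensional_restrict subsetD)

lemma clone_trace_member: "t \<in> clone_trace \<Longrightarrow> t i \<in> F"
  by (simp add: down_trace_def thread_on_def)

lemma is_trace_clone_trace: "is_trace F clone_trace"
  using clone by (intro is_trace_down_trace) (simp add: functional_clone_def thread_on_def)

lemma evaluation_thread_in_trace:
  assumes t: "t \<in> clone_trace" and s: "s \<in> tr"
  shows "(\<lambda>i. t i s) \<in> tr"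
proof -
  have "{i. t i s \<noteq> s i} \<subseteq> {i. t i \<noteq> fproj tr i}"
    using s by (auto simp: fproj_def)
  then have "eqN (\<lambda>i. t i s) s"
    using t finite_subset unfolding eqN_def down_trace_def by auto
  moreover have "thread_on A (\<lambda>i. t i s)"
    using clone_trace_member[OF t] clone_extensional s unfolding thread_on_def by blast
  ultimately show ?thesis
    using trace s unfolding is_trace_def by blast
qed

lemma clone_ops_in_clone:
  assumes "t \<in> clone_trace"
  shows "clone_ops \<sigma> t \<in> F"
proof -
  have "set (map t [0..<n]) \<subseteq> F" for n
    using clone_trace_member[OF assms] by auto
  then show ?thesis
    using clone unfolding down_ops_def down_phi_def functional_clone_def by blast
qed

lemma clone_ops_apply:
  assumes t: "t \<in> clone_trace" and s: "s \<in> tr"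
  shows "clone_ops \<sigma> t s = ops \<sigma> (\<lambda>i. t i s)"
proof -
  define n where "n = (LEAST n. \<forall>i\<ge>n. t i = fproj tr i)"
  have "\<forall>i\<ge>n. t i = fproj tr i"
    using eqN_Least_tail t unfolding n_def down_trace_def by blast
  then have "\<forall>i\<ge>n. t i s = s i"
    using s by (simp add: fproj_def)
  then have "tupd s (map (\<lambda>\<psi>. \<psi> s) (map t [0..<n])) = (\<lambda>i. t i s)"
    using tupd_map_upt[of n "\<lambda>i. t i s" s] by (simp add: comp_def)
  then show ?thesis
    using s evaluation_thread_in_trace[OF t s]
    unfolding down_ops_def down_phi_def fq_def n_def[symmetric] by simp
qed

lemma thom_evaluation:
  assumes "s \<in> tr"
  shows "thom F clone_trace clone_ops A tr ops (\<lambda>\<phi>. \<phi> s)"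
  using assms clone_extensional evaluation_thread_in_trace clone_ops_apply
  unfolding thom_def by (auto simp: comp_def)

lemma tpow_ops_eq_clone_ops:
  assumes "t \<in> clone_trace"
  shows "tpow_ops tr ops \<sigma> t = clone_ops \<sigma> t"
proof -
  have "tpow_ops tr ops \<sigma> t = (\<lambda>s\<in>tr. clone_ops \<sigma> t s)"
    unfolding tpow_ops_def using clone_ops_apply[OF assms] by (auto simp: fun_eq_iff)
  also have "\<dots> = clone_ops \<sigma> t"
    using restrict_clone_eq clone_ops_in_clone[OF assms] by simp
  finally show ?thesis .
qed

lemma tsubalg_tpow_clone:
  "tsubalg (tpow_univ tr A) (tpow_trace tr A tr) (tpow_ops tr ops) F clone_trace"
  unfolding tsubalg_def
proof (intro conjI allI ballI)
  show "F \<subseteq> tpow_univ tr A"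
    using clone_extensional by (simp add: tpow_univ_def)
  show "clone_trace \<subseteq> tpow_trace tr A tr"
    unfolding tpow_trace_def
    using clone_extensional clone_trace_member evaluation_thread_in_trace by blast
  show "is_trace F clone_trace"
    by (rule is_trace_clone_trace)
  show "tpow_ops tr ops \<sigma> t \<in> F" if "t \<in> clone_trace" for \<sigma> t
    using that tpow_ops_eq_clone_ops clone_ops_in_clone by simp
qed

lemma tiso_restrict_clone:
  "tiso F clone_trace clone_ops F clone_trace (tpow_ops tr ops) (\<lambda>\<phi>. \<lambda>s\<in>tr. \<phi> s)"
proof -
  have restrict_comp: "(\<lambda>\<phi>. \<lambda>s\<in>tr. \<phi> s) \<circ> t = t" if "t \<in> clone_trace" for t
    using restrict_clone_eq clone_trace_member[OF that] by (auto simp: fun_eq_iff)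
  have "bij_betw (\<lambda>\<phi>. \<lambda>s\<in>tr. \<phi> s) F F"
    using restrict_clone_eq by (simp add: bij_betw_def inj_on_def image_cong)
  moreover have "(\<lambda>t. (\<lambda>\<phi>. \<lambda>s\<in>tr. \<phi> s) \<circ> t) ` clone_trace = clone_trace"
    using restrict_comp by simp
  ultimately show ?thesis
    unfolding tiso_def thom_def
    using restrict_clone_eq restrict_comp tpow_ops_eq_clone_ops clone_ops_in_clone
    by (auto simp: bij_betw_def)
qed

end

theorem mainTheorem3:
  fixes A :: "'a set" and tr :: "(nat \<Rightarrow> 'a) set" and ops :: "'t \<Rightarrow> (nat \<Rightarrow> 'a) \<Rightarrow> 'a"
    and F :: "((nat \<Rightarrow> 'a) \<Rightarrow> 'a) set"
  assumes "talg A tr ops"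
    and "functional_clone A tr ops F"
  shows "(\<forall>s\<in>tr. thom F (down_trace F (fproj tr)) (down_ops (fq tr) (fproj tr) (\<lambda>\<sigma>. restrict (ops \<sigma>) tr))
                    A tr ops (\<lambda>\<phi>. \<phi> s))
    \<and> (\<exists>B b. tsubalg (tpow_univ tr A) (tpow_trace tr A tr) (tpow_ops tr ops) B b
         \<and> tiso F (down_trace F (fproj tr)) (down_ops (fq tr) (fproj tr) (\<lambda>\<sigma>. restrict (ops \<sigma>) tr))
                B b (tpow_ops tr ops) (\<lambda>\<phi>. \<lambda>s\<in>tr. \<phi> s))"
proof -
  have trace: "is_trace A tr"
    using assms(1) by (simp add: talg_def)
  show ?thesis
    using thom_evaluation[OF trace assms(2)] tsubalg_tpow_clone[OF trace assms(2)]
      tiso_restrict_clone[OF trace assms(2)]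
    by blast
qed

end
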